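(* Let $X_n=(\mathbb{C}^n,\|\cdot\|_{X_n})$ be a Banach lattice, $J\subset\mathbb{N}_0^n$, and $\alpha\in\Lambda(m,n)$. Then (i) $c_{X_n}(\alpha)\,c_{X_n'}(\alpha)\le\frac{m^m}{\alpha^\alpha}$; (ii) $c_{X_n}(\alpha)\le\frac{\|\alpha\|_{X_n}^m}{\alpha^\alpha}$.
   Context: A Banach lattice $X_n=(\mathbb{C}^n,\|\cdot\|)$ is a norm with $\|z\|\le\|w\|$ whenever $|z_k|\le|w_k|$ for all $k$. $X_n'$ is its Köthe dual: $\mathbb{C}^n$ with $\|x\|_{X_n'}=\sup\{\sum_k|x_ky_k|:\|y\|_{X_n}\le1\}$. $\Lambda(m,n)=\{\alpha\in\mathbb{N}_0^n:|\alpha|=m\}$, $\alpha^\alpha=\prod_i\alpha_i^{\alpha_i}$ (with $0^0=1$), and $\|\alpha\|_{X_n}$ is the norm of $(\alpha_1,\dots,\alpha_n)$ in $X_n$. For a normed space $Y_n=(\mathbb{C}^n,\|\cdot\|)$, $c_{Y_n}(\alpha)=1/\sup_{z\in B_{Y_n}}|z^\alpha|$, $B_{Y_n}$ the open unit ball. *)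

theory Defs
  imports "HOL-Analysis.Analysis"
begin

definition is_cnorm :: "(('n::finite \<Rightarrow> complex) \<Rightarrow> real) \<Rightarrow> bool" where
  "is_cnorm N \<longleftrightarrow>
     (\<forall>x. 0 \<le> N x) \<and> (\<forall>x. N x = 0 \<longleftrightarrow> x = (\<lambda>_. 0)) \<and>
     (\<forall>c x. N (\<lambda>k. c * x k) = cmod c * N x) \<and>
     (\<forall>x y. N (\<lambda>k. x k + y k) \<le> N x + N y)"

text \<open>Banach lattice on C^n (completeness is automatic in finite dimension).\<close>
definition banach_lattice :: "(('n::finite \<Rightarrow> complex) \<Rightarrow> real) \<Rightarrow> bool" where
  "banach_lattice N \<longleftrightarrow> is_cnorm N \<and>
     (\<forall>z w. (\<forall>k. cmod (z k) \<le> cmod (w k)) \<longrightarrow> N z \<le> N w)"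

definition kothe_dual :: "(('n::finite \<Rightarrow> complex) \<Rightarrow> real) \<Rightarrow> ('n \<Rightarrow> complex) \<Rightarrow> real" where
  "kothe_dual N x = Sup {(\<Sum>k\<in>UNIV. cmod (x k * y k)) | y. N y \<le> 1}"

definition monom_c :: "('n::finite \<Rightarrow> complex) \<Rightarrow> ('n \<Rightarrow> nat) \<Rightarrow> complex" where
  "monom_c z \<alpha> = (\<Prod>k\<in>UNIV. z k ^ \<alpha> k)"

definition c_coef :: "(('n::finite \<Rightarrow> complex) \<Rightarrow> real) \<Rightarrow> ('n \<Rightarrow> nat) \<Rightarrow> real" where
  "c_coef N \<alpha> = 1 / Sup {cmod (monom_c z \<alpha>) | z. N z < 1}"

text \<open>alpha^alpha with 0^0 = 1.\<close>
definition alpha_pow :: "('n::finite \<Rightarrow> nat) \<Rightarrow> real" where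
  "alpha_pow \<alpha> = (\<Prod>k\<in>UNIV. real (\<alpha> k) ^ \<alpha> k)"

end

theory Submission
  imports Defs
begin

text \<open>
  For (ii), the point \<open>\<alpha> / \<parallel>\<alpha>\<parallel>\<close> lies in the closed unit ball of \<open>X\<^sub>n\<close> and its monomial
  has modulus \<open>\<alpha>\<^sup>\<alpha> / \<parallel>\<alpha>\<parallel>\<^sup>m\<close>.
  For (i), let \<open>z\<^sub>0\<close> maximise \<open>\<bar>z\<^sup>\<alpha>\<bar>\<close> on the compact closed unit ball of \<open>X\<^sub>n\<close>. For \<open>y\<close> in
  the ball, the points \<open>(1 - t)\<bar>z\<^sub>0\<bar> + t\<bar>y\<bar>\<close> stay in the ball because the norm is a lattice
  norm; comparing their monomials with that of \<open>z\<^sub>0\<close> as \<open>t \<rightarrow> 0\<close> gives the first-order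
  condition \<open>\<Sum>\<^sub>k \<alpha>\<^sub>k \<bar>y k\<bar> / \<bar>z\<^sub>0 k\<bar> \<le> m\<close>. Hence \<open>w k = \<alpha>\<^sub>k / (m \<bar>z\<^sub>0 k\<bar>)\<close> lies in the unit ball
  of \<open>X\<^sub>n'\<close>, and \<open>\<bar>z\<^sub>0\<^sup>\<alpha>\<bar> \<bar>w\<^sup>\<alpha>\<bar> = \<alpha>\<^sup>\<alpha> / m\<^sup>m\<close>.
  The open balls in the definition of \<open>c\<close> are handled by scaling with \<open>r \<rightarrow> 1\<close>.
\<close>

definition unit_vec :: "'n \<Rightarrow> 'n \<Rightarrow> complex" where
  "unit_vec k = (\<lambda>i. if i = k then 1 else 0)"

lemma
  assumes "is_cnorm N"
  shows cnorm_nonneg: "0 \<le> N x"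
    and cnorm_eq_0_iff: "N x = 0 \<longleftrightarrow> x = (\<lambda>_. 0)"
    and cnorm_scale: "N (\<lambda>k. c * x k) = cmod c * N x"
    and cnorm_triangle: "N (\<lambda>k. x k + y k) \<le> N x + N y"
  using assms unfolding is_cnorm_def by auto

lemma cnorm_zero: "is_cnorm N \<Longrightarrow> N (\<lambda>_. 0) = 0"
  by (simp add: cnorm_eq_0_iff)

lemma cnorm_pos: "is_cnorm N \<Longrightarrow> x \<noteq> (\<lambda>_. 0) \<Longrightarrow> 0 < N x"
  by (metis cnorm_eq_0_iff cnorm_nonneg order_le_less)

lemma cnorm_unit_vec_pos: "is_cnorm N \<Longrightarrow> 0 < N (unit_vec k)"
  by (rule cnorm_pos) (auto simp: unit_vec_def fun_eq_iff)

lemma cnorm_scale_real: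
  "is_cnorm N \<Longrightarrow> 0 \<le> r \<Longrightarrow> N (\<lambda>k. complex_of_real r * x k) = r * N x"
  by (simp add: cnorm_scale)

lemma cnorm_convex:
  assumes "is_cnorm N" and "0 \<le> t" and "t \<le> 1"
  shows "N (\<lambda>k. complex_of_real (1 - t) * x k + complex_of_real t * y k) \<le> (1 - t) * N x + t * N y"
proof -
  have "N (\<lambda>k. complex_of_real (1 - t) * x k + complex_of_real t * y k)
      \<le> N (\<lambda>k. complex_of_real (1 - t) * x k) + N (\<lambda>k. complex_of_real t * y k)"
    by (rule cnorm_triangle[OF assms(1)])
  also have "\<dots> = (1 - t) * N x + t * N y"
    using assms by (simp only: cnorm_scale_real diff_ge_0_iff_ge)
  finally show ?thesis .
qed

lemma continuous_on_cnorm: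
  assumes "is_cnorm N"
  shows "continuous_on UNIV (\<lambda>v::complex^'n. N (vec_nth v))"
proof (rule convex_on_continuous)
  show "convex_on UNIV (\<lambda>v::complex^'n. N (vec_nth v))"
  proof
    fix t :: real and x y :: "complex^'n"
    assume "0 < t" "t < 1"
    moreover have "vec_nth ((1 - t) *\<^sub>R x + t *\<^sub>R y)
        = (\<lambda>k. complex_of_real (1 - t) * x$k + complex_of_real t * y$k)"
      by (simp add: fun_eq_iff, simp add: scaleR_conv_of_real)
    ultimately show "N (vec_nth ((1 - t) *\<^sub>R x + t *\<^sub>R y)) \<le> (1 - t) * N (vec_nth x) + t * N (vec_nth y)"
      using cnorm_convex[OF assms, of t "vec_nth x" "vec_nth y"] by simp
  qed simp
qed simp

lemma
  assumes "banach_lattice N"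
  shows banach_lattice_is_cnorm: "is_cnorm N"
    and banach_lattice_mono: "(\<And>k. cmod (z k) \<le> cmod (w k)) \<Longrightarrow> N z \<le> N w"
  using assms unfolding banach_lattice_def by auto

lemma banach_lattice_norm_abs:
  assumes "banach_lattice N"
  shows "N (\<lambda>k. complex_of_real (cmod (z k))) = N z"
  by (intro antisym banach_lattice_mono[OF assms]) simp_all

lemma banach_lattice_coord_le:
  assumes "banach_lattice N"
  shows "cmod (z k) * N (unit_vec k) \<le> N z"
proof -
  have "N (\<lambda>i. z k * unit_vec k i) \<le> N z"
    by (rule banach_lattice_mono[OF assms]) (simp add: unit_vec_def)
  then show ?thesis
    by (simp add: cnorm_scale banach_lattice_is_cnorm[OF assms])
qed

lemma banach_lattice_ball_coord_le:
  assumes "banach_lattice N" and "N z \<le> 1"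
  shows "cmod (z k) \<le> 1 / N (unit_vec k)"
  using banach_lattice_coord_le[OF assms(1), of z k] assms(2)
    cnorm_unit_vec_pos[OF banach_lattice_is_cnorm[OF assms(1)], of k]
  by (simp add: field_simps)

lemma compact_banach_lattice_ball:
  assumes "banach_lattice N"
  shows "compact {v::complex^'n. N (vec_nth v) \<le> 1}"
proof (rule compact_eq_bounded_closed[THEN iffD2], rule conjI)
  have "norm v \<le> (\<Sum>k\<in>UNIV. 1 / N (unit_vec k))" if "N (vec_nth v) \<le> 1" for v :: "complex^'n"
  proof -
    have "norm v \<le> (\<Sum>k\<in>UNIV. norm (v$k))"
      unfolding norm_vec_def by (rule L2_set_le_sum) simp
    also have "\<dots> \<le> (\<Sum>k\<in>UNIV. 1 / N (unit_vec k))"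
      using banach_lattice_ball_coord_le[OF assms that] by (intro sum_mono) simp
    finally show ?thesis .
  qed
  then show "bounded {v::complex^'n. N (vec_nth v) \<le> 1}"
    unfolding bounded_iff by blast
  show "closed {v::complex^'n. N (vec_nth v) \<le> 1}"
    by (rule closed_Collect_le[OF continuous_on_cnorm[OF banach_lattice_is_cnorm[OF assms]]]) simp
qed

section \<open>The Koethe dual of a Banach lattice\<close>

lemma kothe_dual_upper:
  assumes "banach_lattice N" and "N y \<le> 1"
  shows "(\<Sum>k\<in>UNIV. cmod (x k * y k)) \<le> kothe_dual N x"
  unfolding kothe_dual_def
proof (rule cSup_upper)
  show "bdd_above {\<Sum>k\<in>UNIV. cmod (x k * y k) |y. N y \<le> 1}"
  proof (rule bdd_aboveI, clarify)
    fix y' assume "N y' \<le> 1"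
    then have "cmod (y' k) \<le> 1 / N (unit_vec k)" for k
      by (rule banach_lattice_ball_coord_le[OF assms(1)])
    then show "(\<Sum>k\<in>UNIV. cmod (x k * y' k)) \<le> (\<Sum>k\<in>UNIV. cmod (x k) * (1 / N (unit_vec k)))"
      unfolding norm_mult by (intro sum_mono mult_left_mono) simp_all
  qed
qed (use assms(2) in blast)

lemma kothe_dual_least:
  assumes "is_cnorm N" and "\<And>y. N y \<le> 1 \<Longrightarrow> (\<Sum>k\<in>UNIV. cmod (x k * y k)) \<le> b"
  shows "kothe_dual N x \<le> b"
  unfolding kothe_dual_def
proof (rule cSup_least)
  show "{\<Sum>k\<in>UNIV. cmod (x k * y k) |y. N y \<le> 1} \<noteq> {}"
    using cnorm_zero[OF assms(1)] by (auto intro!: exI[of _ "\<lambda>_. 0"])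
qed (auto intro: assms(2))

lemma kothe_dual_nonneg: "banach_lattice N \<Longrightarrow> 0 \<le> kothe_dual N x"
  using kothe_dual_upper[of N "\<lambda>_. 0" x] by (simp add: cnorm_zero banach_lattice_is_cnorm)

lemma kothe_dual_eq_0_iff:
  assumes bl: "banach_lattice N"
  shows "kothe_dual N x = 0 \<longleftrightarrow> x = (\<lambda>_. 0)"
proof
  have N: "is_cnorm N" by (rule banach_lattice_is_cnorm[OF bl])
  assume dual0: "kothe_dual N x = 0"
  show "x = (\<lambda>_. 0)"
  proof (rule ccontr)
    assume "x \<noteq> (\<lambda>_. 0)"
    then obtain k where "x k \<noteq> 0" by auto
    define e where "e = N (unit_vec k)"
    have e: "0 < e" unfolding e_def by (rule cnorm_unit_vec_pos[OF N])
    have "N (\<lambda>i. complex_of_real (1 / e) * unit_vec k i) = 1 / e * e"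
      unfolding e_def using e by (intro cnorm_scale_real[OF N]) (simp add: e_def)
    also have "\<dots> = 1" using e by simp
    finally have "(\<Sum>i\<in>UNIV. cmod (x i * (complex_of_real (1 / e) * unit_vec k i))) \<le> 0"
      using kothe_dual_upper[OF bl, of "\<lambda>i. complex_of_real (1 / e) * unit_vec k i" x] dual0 by simp
    moreover have "(\<Sum>i\<in>UNIV. cmod (x i * (complex_of_real (1 / e) * unit_vec k i))) = cmod (x k) / e"
      using e by (simp add: unit_vec_def norm_mult norm_divide if_distrib cong: if_cong)
    ultimately show False using e \<open>x k \<noteq> 0\<close> by (simp add: divide_le_0_iff)
  qed
next
  assume "x = (\<lambda>_. 0)"
  then show "kothe_dual N x = 0"
    using kothe_dual_least[OF banach_lattice_is_cnorm[OF bl], of x 0] kothe_dual_nonneg[OF bl, of x]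
    by simp
qed

lemma kothe_dual_scale:
  assumes bl: "banach_lattice N"
  shows "kothe_dual N (\<lambda>k. c * x k) = cmod c * kothe_dual N x"
proof (rule antisym)
  have N: "is_cnorm N" by (rule banach_lattice_is_cnorm[OF bl])
  show "kothe_dual N (\<lambda>k. c * x k) \<le> cmod c * kothe_dual N x"
  proof (rule kothe_dual_least[OF N])
    fix y assume "N y \<le> 1"
    then have "cmod c * (\<Sum>k\<in>UNIV. cmod (x k * y k)) \<le> cmod c * kothe_dual N x"
      by (intro mult_left_mono kothe_dual_upper[OF bl]) simp_all
    then show "(\<Sum>k\<in>UNIV. cmod (c * x k * y k)) \<le> cmod c * kothe_dual N x"
      by (simp add: norm_mult sum_distrib_left mult.assoc)
  qed
  show "cmod c * kothe_dual N x \<le> kothe_dual N (\<lambda>k. c * x k)"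
  proof (cases "c = 0")
    case True
    then show ?thesis using kothe_dual_nonneg[OF bl] by simp
  next
    case False
    have "kothe_dual N x \<le> kothe_dual N (\<lambda>k. c * x k) / cmod c"
    proof (rule kothe_dual_least[OF N])
      fix y assume "N y \<le> 1"
      then have "(\<Sum>k\<in>UNIV. cmod (c * x k * y k)) \<le> kothe_dual N (\<lambda>k. c * x k)"
        by (rule kothe_dual_upper[OF bl])
      then show "(\<Sum>k\<in>UNIV. cmod (x k * y k)) \<le> kothe_dual N (\<lambda>k. c * x k) / cmod c"
        using False by (simp add: norm_mult mult.assoc sum_distrib_left[symmetric] field_simps)
    qed
    then show ?thesis using False by (simp add: field_simps)
  qed
qed

lemma kothe_dual_triangle:
  assumes bl: "banach_lattice N"
  shows "kothe_dual N (\<lambda>k. x k + y k) \<le> kothe_dual N x + kothe_dual N y"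
proof (rule kothe_dual_least[OF banach_lattice_is_cnorm[OF bl]])
  fix w assume w: "N w \<le> 1"
  have "(\<Sum>k\<in>UNIV. cmod ((x k + y k) * w k))
      \<le> (\<Sum>k\<in>UNIV. cmod (x k * w k)) + (\<Sum>k\<in>UNIV. cmod (y k * w k))"
    unfolding sum.distrib[symmetric] distrib_right by (intro sum_mono norm_triangle_ineq)
  also have "\<dots> \<le> kothe_dual N x + kothe_dual N y"
    using w by (intro add_mono kothe_dual_upper[OF bl])
  finally show "(\<Sum>k\<in>UNIV. cmod ((x k + y k) * w k)) \<le> kothe_dual N x + kothe_dual N y" .
qed

lemma kothe_dual_mono:
  assumes bl: "banach_lattice N" and le: "\<And>k. cmod (z k) \<le> cmod (w k)"
  shows "kothe_dual N z \<le> kothe_dual N w"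
proof (rule kothe_dual_least[OF banach_lattice_is_cnorm[OF bl]])
  fix y assume y: "N y \<le> 1"
  have "(\<Sum>k\<in>UNIV. cmod (z k * y k)) \<le> (\<Sum>k\<in>UNIV. cmod (w k * y k))"
    using le by (intro sum_mono) (simp add: norm_mult mult_right_mono)
  also have "\<dots> \<le> kothe_dual N w" using y by (rule kothe_dual_upper[OF bl])
  finally show "(\<Sum>k\<in>UNIV. cmod (z k * y k)) \<le> kothe_dual N w" .
qed

lemma banach_lattice_kothe_dual: "banach_lattice N \<Longrightarrow> banach_lattice (kothe_dual N)"
  unfolding banach_lattice_def[of "kothe_dual N"] is_cnorm_def
  by (simp add: kothe_dual_nonneg kothe_dual_eq_0_iff kothe_dual_scale kothe_dual_triangle kothe_dual_mono)

section \<open>Monomials on the unit ball\<close>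

lemma norm_monom_c: "cmod (monom_c z \<alpha>) = (\<Prod>k\<in>UNIV. cmod (z k) ^ \<alpha> k)"
  unfolding monom_c_def by (simp add: prod_norm[symmetric] norm_power)

lemma norm_monom_c_scale:
  "cmod (monom_c (\<lambda>k. c * z k) \<alpha>) = cmod c ^ (\<Sum>k\<in>UNIV. \<alpha> k) * cmod (monom_c z \<alpha>)"
  by (simp add: norm_monom_c norm_mult power_mult_distrib prod.distrib power_sum)

lemma monom_c_eq_0_iff: "monom_c z \<alpha> = 0 \<longleftrightarrow> (\<exists>k. \<alpha> k \<noteq> 0 \<and> z k = 0)"
  by (auto simp: monom_c_def)

lemma monom_c_attains_max:
  fixes N :: "('n::finite \<Rightarrow> complex) \<Rightarrow> real"
  assumes "banach_lattice N"
  obtains z0 where "N z0 \<le> 1" and "\<And>z. N z \<le> 1 \<Longrightarrow> cmod (monom_c z \<alpha>) \<le> cmod (monom_c z0 \<alpha>)"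
proof -
  let ?S = "{v::complex^'n. N (vec_nth v) \<le> 1}"
  have "vec_lambda (\<lambda>_. 0) \<in> ?S"
    by (simp add: cnorm_zero banach_lattice_is_cnorm[OF assms] vec_lambda_inverse)
  moreover have "continuous_on ?S (\<lambda>v. cmod (monom_c (vec_nth v) \<alpha>))"
    unfolding norm_monom_c by (intro continuous_intros)
  ultimately obtain v0 where v0: "v0 \<in> ?S"
    and max: "\<forall>v\<in>?S. cmod (monom_c (vec_nth v) \<alpha>) \<le> cmod (monom_c (vec_nth v0) \<alpha>)"
    using continuous_attains_sup[OF compact_banach_lattice_ball[OF assms]] by blast
  show ?thesis
  proof (rule that)
    show "N (vec_nth v0) \<le> 1" using v0 by simp
    fix z assume "N z \<le> 1"
    then show "cmod (monom_c z \<alpha>) \<le> cmod (monom_c (vec_nth v0) \<alpha>)"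
      using max[rule_format, of "vec_lambda z"] by (simp add: vec_lambda_inverse)
  qed
qed

lemma norm_monom_c_le_Sup_ball:
  assumes bl: "banach_lattice N" and x: "N x \<le> 1"
  shows "cmod (monom_c x \<alpha>) \<le> Sup {cmod (monom_c z \<alpha>) | z. N z < 1}"
proof -
  define S where "S = {cmod (monom_c z \<alpha>) | z. N z < 1}"
  obtain z0 where "\<And>z. N z \<le> 1 \<Longrightarrow> cmod (monom_c z \<alpha>) \<le> cmod (monom_c z0 \<alpha>)"
    using monom_c_attains_max[OF bl] by blast
  then have bdd: "bdd_above S"
    unfolding S_def by (intro bdd_aboveI[of _ "cmod (monom_c z0 \<alpha>)"]) auto
  have bound: "r ^ (\<Sum>k\<in>UNIV. \<alpha> k) * cmod (monom_c x \<alpha>) \<le> Sup S" if r: "0 < r" "r < 1" for r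
  proof -
    have "N (\<lambda>k. complex_of_real r * x k) = r * N x"
      using r by (intro cnorm_scale_real[OF banach_lattice_is_cnorm[OF bl]]) simp
    also have "\<dots> \<le> r"
      using r x by (intro mult_left_le) simp_all
    also have "\<dots> < 1" by (fact r(2))
    finally have "cmod (monom_c (\<lambda>k. complex_of_real r * x k) \<alpha>) \<le> Sup S"
      unfolding S_def by (intro cSup_upper[OF _ bdd[unfolded S_def]]) blast
    then show ?thesis using r by (simp add: norm_monom_c_scale)
  qed
  have "\<forall>\<^sub>F r in at_left 1. r \<in> {0<..<1::real}"
    by (rule eventually_at_left_real) simp
  then have "\<forall>\<^sub>F r in at_left 1. r ^ (\<Sum>k\<in>UNIV. \<alpha> k) * cmod (monom_c x \<alpha>) \<le> Sup S"
    by eventually_elim (use bound in auto)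
  then have "1 ^ (\<Sum>k\<in>UNIV. \<alpha> k) * cmod (monom_c x \<alpha>) \<le> Sup S"
    by (rule tendsto_upperbound[rotated]) (simp, intro tendsto_intros)
  then show ?thesis by (simp add: S_def)
qed

lemma ex_ball_monom_c_nonzero:
  fixes N :: "('n::finite \<Rightarrow> complex) \<Rightarrow> real"
  assumes "is_cnorm N"
  obtains x where "N x \<le> 1" and "monom_c x \<alpha> \<noteq> 0"
proof
  define u where "u = N (\<lambda>_. 1)"
  have "0 < u" unfolding u_def by (rule cnorm_pos[OF assms]) (simp add: fun_eq_iff)
  then have "N (\<lambda>k. complex_of_real (1 / u) * 1) = 1 / u * N (\<lambda>_. 1)"
    by (intro cnorm_scale_real[OF assms]) simp
  with \<open>0 < u\<close> show "N (\<lambda>k. complex_of_real (1 / u) * 1) \<le> 1"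
    by (simp add: u_def)
  show "monom_c (\<lambda>k. complex_of_real (1 / u) * 1) \<alpha> \<noteq> 0"
    using \<open>0 < u\<close> by (simp add: monom_c_eq_0_iff)
qed

lemma c_coef_le_inverse_norm_monom:
  assumes "banach_lattice N" and "N x \<le> 1" and "monom_c x \<alpha> \<noteq> 0"
  shows "c_coef N \<alpha> \<le> 1 / cmod (monom_c x \<alpha>)"
  unfolding c_coef_def using norm_monom_c_le_Sup_ball[OF assms(1,2)] assms(3)
  by (simp add: frac_le)

lemma c_coef_pos:
  assumes "banach_lattice N"
  shows "0 < c_coef N \<alpha>"
proof -
  obtain x where "N x \<le> 1" and "monom_c x \<alpha> \<noteq> 0"
    using ex_ball_monom_c_nonzero[OF banach_lattice_is_cnorm[OF assms]] .
  then have "0 < Sup {cmod (monom_c z \<alpha>) | z. N z < 1}"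
    using norm_monom_c_le_Sup_ball[OF assms, of x \<alpha>] by (meson less_le_trans zero_less_norm_iff)
  then show ?thesis unfolding c_coef_def by simp
qed

section \<open>First-order condition at a maximiser\<close>

lemma ln_ge_1_minus_inverse: "0 < (y::real) \<Longrightarrow> 1 - 1 / y \<le> ln y"
  using ln_le_minus_one[of "1 / y"] by (simp add: ln_div)

lemma sum_nonpos_of_prod_power_le_one:
  fixes c :: "'a \<Rightarrow> real" and a :: "'a \<Rightarrow> nat"
  assumes I: "finite I" and c: "\<And>k. k \<in> I \<Longrightarrow> -1 \<le> c k"
    and prod_le: "\<And>t. 0 < t \<Longrightarrow> t < 1 \<Longrightarrow> (\<Prod>k\<in>I. (1 + t * c k) ^ a k) \<le> 1"
  shows "(\<Sum>k\<in>I. a k * c k) \<le> 0"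
proof -
  \<comment> \<open>\<open>ln (1 + x) \<ge> x / (1 + x)\<close> turns the hypothesis into \<open>g t \<le> 0\<close>, and \<open>g 0\<close> is the sum.\<close>
  define g where "g t = (\<Sum>k\<in>I. a k * (c k / (1 + t * c k)))" for t
  have "g t \<le> 0" if t: "0 < t" "t < 1" for t
  proof -
    have pos: "0 < 1 + t * c k" if "k \<in> I" for k
    proof -
      have "t * -1 \<le> t * c k" using c[OF that] t by (intro mult_left_mono) simp_all
      then show ?thesis using t by linarith
    qed
    have "t * g t = (\<Sum>k\<in>I. a k * (1 - 1 / (1 + t * c k)))"
      unfolding g_def sum_distrib_left
    proof (intro sum.cong refl)
      fix k assume "k \<in> I"
      then show "t * (a k * (c k / (1 + t * c k))) = a k * (1 - 1 / (1 + t * c k))"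
        using pos[of k] by (simp add: field_simps)
    qed
    also have "\<dots> \<le> (\<Sum>k\<in>I. a k * ln (1 + t * c k))"
      using pos by (intro sum_mono mult_left_mono ln_ge_1_minus_inverse) simp_all
    also have "\<dots> = (\<Sum>k\<in>I. ln ((1 + t * c k) ^ a k))"
      by (simp add: ln_realpow)
    also have "\<dots> = ln (\<Prod>k\<in>I. (1 + t * c k) ^ a k)"
      using pos by (intro ln_prod[OF I, symmetric]) fastforce
    also have "\<dots> \<le> 0"
      using pos prod_le[OF t] by (simp add: prod_pos)
    finally show ?thesis using t by (simp add: mult_le_0_iff)
  qed
  then have "\<forall>\<^sub>F t in at_right 0. g t \<le> 0"
    using eventually_at_right_real[of 0 1] by (auto elim: eventually_mono)
  moreover have "(g \<longlongrightarrow> g 0) (at_right 0)"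
    unfolding g_def by (intro tendsto_intros) auto
  ultimately have "g 0 \<le> 0" by (intro tendsto_upperbound) auto
  then show ?thesis by (simp add: g_def)
qed

lemma monom_c_max_first_order:
  fixes N :: "('n::finite \<Rightarrow> complex) \<Rightarrow> real"
  assumes bl: "banach_lattice N" and z0: "N z0 \<le> 1"
    and max: "\<And>z. N z \<le> 1 \<Longrightarrow> cmod (monom_c z \<alpha>) \<le> cmod (monom_c z0 \<alpha>)"
    and nz: "monom_c z0 \<alpha> \<noteq> 0" and y: "N y \<le> 1"
  shows "(\<Sum>k\<in>UNIV. \<alpha> k * cmod (y k) / cmod (z0 k)) \<le> (\<Sum>k\<in>UNIV. \<alpha> k)"
proof -
  have N: "is_cnorm N" by (rule banach_lattice_is_cnorm[OF bl])
  define c where "c k = cmod (y k) / cmod (z0 k) - 1" for k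
  have "(\<Sum>k\<in>UNIV. \<alpha> k * c k) \<le> 0"
  proof (rule sum_nonpos_of_prod_power_le_one)
    show "-1 \<le> c k" for k unfolding c_def by simp
    fix t :: real assume t: "0 < t" "t < 1"
    define v where "v k = complex_of_real (1 - t) * cmod (z0 k) + complex_of_real t * cmod (y k)" for k
    have "N v \<le> (1 - t) * N z0 + t * N y"
      using cnorm_convex[OF N, of t "\<lambda>k. cmod (z0 k)" "\<lambda>k. cmod (y k)"] t
      unfolding v_def banach_lattice_norm_abs[OF bl] by simp
    also have "\<dots> \<le> 1"
      using z0 y t convex_bound_le[of "N z0" 1 "N y" "1 - t" t] by simp
    finally have "cmod (monom_c v \<alpha>) \<le> cmod (monom_c z0 \<alpha>)" by (rule max)
    moreover have "cmod (v k) ^ \<alpha> k = cmod (z0 k) ^ \<alpha> k * (1 + t * c k) ^ \<alpha> k" for k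
    proof (cases "\<alpha> k = 0")
      case False
      then have "z0 k \<noteq> 0" using nz unfolding monom_c_eq_0_iff by blast
      have "v k = complex_of_real ((1 - t) * cmod (z0 k) + t * cmod (y k))"
        by (simp add: v_def)
      then have "cmod (v k) = (1 - t) * cmod (z0 k) + t * cmod (y k)"
        by (simp only: norm_of_real) (use t in simp)
      also have "\<dots> = cmod (z0 k) * (1 + t * c k)"
        using \<open>z0 k \<noteq> 0\<close> by (simp add: c_def field_simps)
      finally show ?thesis by (simp add: power_mult_distrib)
    qed simp
    then have "cmod (monom_c v \<alpha>) = cmod (monom_c z0 \<alpha>) * (\<Prod>k\<in>UNIV. (1 + t * c k) ^ \<alpha> k)"
      by (simp add: norm_monom_c prod.distrib)
    ultimately show "(\<Prod>k\<in>UNIV. (1 + t * c k) ^ \<alpha> k) \<le> 1"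
      using nz by (simp add: mult_le_cancel_left1)
  qed simp
  then show ?thesis
    by (simp add: c_def right_diff_distrib sum_subtractf sum_divide_distrib)
qed

lemma alpha_pow_pos: "0 < alpha_pow \<alpha>"
  unfolding alpha_pow_def
proof (intro prod_pos)
  show "0 < real (\<alpha> k) ^ \<alpha> k" for k by (cases "\<alpha> k = 0") simp_all
qed

lemma norm_monom_c_of_nat: "cmod (monom_c (\<lambda>k. of_nat (\<alpha> k)) \<alpha>) = alpha_pow \<alpha>"
  by (simp add: norm_monom_c alpha_pow_def)

lemma c_coef_le_norm_alpha:
  fixes N :: "('n::finite \<Rightarrow> complex) \<Rightarrow> real"
  assumes bl: "banach_lattice N" and m: "(\<Sum>k\<in>UNIV. \<alpha> k) = m"
  shows "c_coef N \<alpha> \<le> N (\<lambda>k. of_nat (\<alpha> k)) ^ m / alpha_pow \<alpha>"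
proof -
  have N: "is_cnorm N" by (rule banach_lattice_is_cnorm[OF bl])
  define a where "a = N (\<lambda>k. of_nat (\<alpha> k))"
  define x where "x k = complex_of_real (1 / a) * of_nat (\<alpha> k)" for k
  have "N x = 1 / a * a"
    unfolding x_def a_def by (intro cnorm_scale_real[OF N]) (simp add: cnorm_nonneg[OF N])
  then have "N x \<le> 1" by simp
  have "a = 0 \<Longrightarrow> m = 0"
    unfolding a_def cnorm_eq_0_iff[OF N] using m by (simp add: fun_eq_iff)
  then have "(1 / a) ^ m \<noteq> 0" by auto
  moreover have norm_x: "cmod (monom_c x \<alpha>) = (1 / a) ^ m * alpha_pow \<alpha>"
    unfolding x_def norm_monom_c_scale m norm_monom_c_of_nat
    using cnorm_nonneg[OF N] by (simp add: a_def norm_divide)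
  ultimately have "monom_c x \<alpha> \<noteq> 0"
    using alpha_pow_pos[of \<alpha>] by (metis mult_eq_0_iff norm_zero order_less_irrefl)
  with \<open>N x \<le> 1\<close> have "c_coef N \<alpha> \<le> 1 / cmod (monom_c x \<alpha>)"
    by (rule c_coef_le_inverse_norm_monom[OF bl])
  also have "\<dots> = a ^ m / alpha_pow \<alpha>"
    unfolding norm_x by (simp add: power_one_over)
  finally show ?thesis unfolding a_def .
qed

lemma norm_monom_c_dual_point:
  assumes m: "(\<Sum>k\<in>UNIV. \<alpha> k) = m" and nz: "monom_c z \<alpha> \<noteq> 0"
  shows "cmod (monom_c (\<lambda>k. of_real (\<alpha> k / (m * cmod (z k)))) \<alpha>) * cmod (monom_c z \<alpha>)
    = alpha_pow \<alpha> / real m ^ m"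
proof -
  have factor: "(\<alpha> k / (m * cmod (z k))) ^ \<alpha> k * cmod (z k) ^ \<alpha> k = real (\<alpha> k) ^ \<alpha> k / real m ^ \<alpha> k"
    for k
  proof (cases "\<alpha> k = 0")
    case False
    then have "z k \<noteq> 0" using nz unfolding monom_c_eq_0_iff by blast
    moreover have "m \<noteq> 0" using False m member_le_sum[of k UNIV \<alpha>] by simp
    ultimately have "\<alpha> k / (m * cmod (z k)) * cmod (z k) = \<alpha> k / m" by simp
    then show ?thesis by (metis power_mult_distrib power_divide)
  qed simp
  have "cmod (monom_c (\<lambda>k. of_real (\<alpha> k / (m * cmod (z k)))) \<alpha>) * cmod (monom_c z \<alpha>)
      = (\<Prod>k\<in>UNIV. (\<alpha> k / (m * cmod (z k))) ^ \<alpha> k * cmod (z k) ^ \<alpha> k)"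
    by (simp add: norm_monom_c prod.distrib norm_divide norm_mult)
  also have "\<dots> = alpha_pow \<alpha> / real m ^ m"
    unfolding factor prod_dividef alpha_pow_def power_sum[symmetric] m ..
  finally show ?thesis .
qed

lemma c_coef_mul_c_coef_kothe_dual_le:
  fixes N :: "('n::finite \<Rightarrow> complex) \<Rightarrow> real"
  assumes bl: "banach_lattice N" and m: "(\<Sum>k\<in>UNIV. \<alpha> k) = m"
  shows "c_coef N \<alpha> * c_coef (kothe_dual N) \<alpha> \<le> real m ^ m / alpha_pow \<alpha>"
proof -
  have N: "is_cnorm N" by (rule banach_lattice_is_cnorm[OF bl])
  obtain z0 where z0: "N z0 \<le> 1"
    and max: "\<And>z. N z \<le> 1 \<Longrightarrow> cmod (monom_c z \<alpha>) \<le> cmod (monom_c z0 \<alpha>)"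
    using monom_c_attains_max[OF bl] by blast
  obtain x where "N x \<le> 1" and "monom_c x \<alpha> \<noteq> 0"
    using ex_ball_monom_c_nonzero[OF N] .
  then have nz: "monom_c z0 \<alpha> \<noteq> 0"
    using max by force
  define w where "w k = complex_of_real (\<alpha> k / (m * cmod (z0 k)))" for k
  have w_monom: "cmod (monom_c w \<alpha>) * cmod (monom_c z0 \<alpha>) = alpha_pow \<alpha> / real m ^ m"
    unfolding w_def by (rule norm_monom_c_dual_point[OF m nz])
  have "kothe_dual N w \<le> 1"
  proof (rule kothe_dual_least[OF N])
    fix y assume "N y \<le> 1"
    then have "(\<Sum>k\<in>UNIV. \<alpha> k * cmod (y k) / cmod (z0 k)) \<le> m"
      using monom_c_max_first_order[OF bl z0 max nz] by (simp add: m flip: of_nat_sum)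
    moreover have "(\<Sum>k\<in>UNIV. cmod (w k * y k)) = (\<Sum>k\<in>UNIV. \<alpha> k * cmod (y k) / cmod (z0 k)) / m"
      unfolding w_def sum_divide_distrib by (intro sum.cong refl) (simp add: norm_mult norm_divide)
    \<comment> \<open>For \<open>m = 0\<close> division by zero makes \<open>w = 0\<close>.\<close>
    ultimately show "(\<Sum>k\<in>UNIV. cmod (w k * y k)) \<le> 1"
      by (cases "m = 0") (simp_all add: divide_le_eq_1)
  qed
  moreover have "monom_c w \<alpha> \<noteq> 0"
    using w_monom alpha_pow_pos[of \<alpha>] by (auto simp: power_eq_0_iff)
  ultimately have "c_coef (kothe_dual N) \<alpha> \<le> 1 / cmod (monom_c w \<alpha>)"
    by (rule c_coef_le_inverse_norm_monom[OF banach_lattice_kothe_dual[OF bl]])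
  moreover have "c_coef N \<alpha> \<le> 1 / cmod (monom_c z0 \<alpha>)"
    using z0 nz by (rule c_coef_le_inverse_norm_monom[OF bl])
  ultimately have "c_coef N \<alpha> * c_coef (kothe_dual N) \<alpha>
      \<le> 1 / cmod (monom_c z0 \<alpha>) * (1 / cmod (monom_c w \<alpha>))"
    using c_coef_pos[OF banach_lattice_kothe_dual[OF bl], of \<alpha>] by (intro mult_mono) simp_all
  also have "\<dots> = real m ^ m / alpha_pow \<alpha>"
    using w_monom by (simp add: field_simps)
  finally show ?thesis .
qed

theorem theorem2p19:
  fixes N :: "('n::finite \<Rightarrow> complex) \<Rightarrow> real"
    and \<alpha> :: "'n \<Rightarrow> nat" and m :: nat
  assumes "banach_lattice N"
    and "(\<Sum>k\<in>UNIV. \<alpha> k) = m"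
  shows "c_coef N \<alpha> * c_coef (kothe_dual N) \<alpha> \<le> real m ^ m / alpha_pow \<alpha>
     \<and> c_coef N \<alpha> \<le> (N (\<lambda>k. complex_of_nat (\<alpha> k))) ^ m / alpha_pow \<alpha>"
  using c_coef_mul_c_coef_kothe_dual_le[OF assms] c_coef_le_norm_alpha[OF assms] by simp

end
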